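(* Let $v\ge2$ and $k\in\{3,4\}$. Then an optimum $(d,2)$-CDA$((d+1)v^2;k,v)$ exists for every positive integer $d$ with $d+1\le v$.
   Context: Consecutive $t$-way interaction in an $N\times k$ array $A=(a_{ij})$ over a $v$-set $V$: $T=\{(i,x_i),\dots,(i+t-1,x_{i+t-1})\}$, $1\le i\le k-t+1$, $x_r\in V$; $\rho(A,T)=\{r: a_{r,j}=x_j\ \forall (j,x_j)\in T\}$, $\rho(A,\mathcal T)=\bigcup_{T\in\mathcal T}\rho(A,T)$. A $(d,t)$-CDA$(N;k,v)$ is an $N\times k$ array over $V$ in which every $t$ consecutive columns contain every $t$-tuple at least once, and such that for every set $\mathcal T$ of exactly $d$ distinct consecutive $t$-way interactions and every consecutive $t$-way interaction $T$: $\rho(A,T)\subseteq\rho(A,\mathcal T)$ iff $T\in\mathcal T$. It is optimum if $N=(d+1)v^t$. *)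

theory Defs
  imports Main
begin

text \<open>Arrays: an N x k array over V = {0..<v} is a function A :: nat => nat => nat,
  rows 0..<N, columns 0..<k (columns are 0-indexed), with A r j in {0..<v}.\<close>

definition is_array :: "nat \<Rightarrow> nat \<Rightarrow> nat \<Rightarrow> (nat \<Rightarrow> nat \<Rightarrow> nat) \<Rightarrow> bool" where
  "is_array N k v A \<longleftrightarrow> (\<forall>r<N. \<forall>j<k. A r j \<in> {0..<v})"

definition cons_interactions :: "nat \<Rightarrow> nat \<Rightarrow> nat \<Rightarrow> (nat \<times> nat) set set" where
  "cons_interactions t k v =
     {T. \<exists>i x. i + t \<le> k \<and> (\<forall>j<t. x (i + j) \<in> {0..<v}) \<and>
              T = {(i + j, x (i + j)) | j. j < t}}"

definition rho :: "nat \<Rightarrow> (nat \<Rightarrow> nat \<Rightarrow> nat) \<Rightarrow> (nat \<times> nat) set \<Rightarrow> nat set" where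
  "rho N A T = {r. r < N \<and> (\<forall>(j, x)\<in>T. A r j = x)}"

definition rho_set :: "nat \<Rightarrow> (nat \<Rightarrow> nat \<Rightarrow> nat) \<Rightarrow> (nat \<times> nat) set set \<Rightarrow> nat set" where
  "rho_set N A \<T> = (\<Union>T\<in>\<T>. rho N A T)"

definition is_CDA :: "nat \<Rightarrow> nat \<Rightarrow> nat \<Rightarrow> nat \<Rightarrow> nat \<Rightarrow> (nat \<Rightarrow> nat \<Rightarrow> nat) \<Rightarrow> bool" where
  "is_CDA d t N k v A \<longleftrightarrow>
     is_array N k v A \<and>
     (\<forall>i. i + t \<le> k \<longrightarrow> (\<forall>x. (\<forall>j<t. x j \<in> {0..<v}) \<longrightarrow>
          (\<exists>r<N. \<forall>j<t. A r (i + j) = x j))) \<and>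
     (\<forall>\<T>. \<T> \<subseteq> cons_interactions t k v \<and> card \<T> = d \<longrightarrow>
        (\<forall>T\<in>cons_interactions t k v. rho N A T \<subseteq> rho_set N A \<T> \<longleftrightarrow> T \<in> \<T>))"

definition is_optimum_CDA :: "nat \<Rightarrow> nat \<Rightarrow> nat \<Rightarrow> nat \<Rightarrow> nat \<Rightarrow> (nat \<Rightarrow> nat \<Rightarrow> nat) \<Rightarrow> bool" where
  "is_optimum_CDA d t N k v A \<longleftrightarrow> is_CDA d t N k v A \<and> N = (d + 1) * v ^ t"

end

theory Submission
  imports Defs "HOL-Number_Theory.Cong"
begin

text \<open>Stack \<open>d + 1\<close> blocks of \<open>v\<^sup>2\<close> rows, block \<open>s\<close> consisting of the rows
  \<open>(a, b, a + b + s, b + s) mod v\<close> for \<open>a, b < v\<close>. In every block each pair of adjacent columns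
  is a bijection of \<open>V\<^sup>2\<close>, so every consecutive interaction \<open>T\<close> is covered by exactly one
  row of each block. Two distinct windows of adjacent columns together see either columns 1 and 3
  or columns 0, 1, 2, and either way the block index \<open>s\<close> is determined by those entries; hence
  all rows covering two distinct interactions lie in one block, so any other interaction covers at
  most one of the \<open>d + 1\<close> rows covering \<open>T\<close>, and \<open>d\<close> of them cannot cover all of them.\<close>

lemma is_CDA_from_blocks:
  fixes block :: "nat \<Rightarrow> nat"
  assumes array: "is_array N k v A" and "d \<ge> 1"
    and covers: "\<And>T s. T \<in> cons_interactions t k v \<Longrightarrow> s \<le> d \<Longrightarrow> \<exists>r\<in>rho N A T. block r = s"
    and same_block: "\<And>T T' r r'. T \<in> cons_interactions t k v \<Longrightarrow> T' \<in> cons_interactions t k v \<Longrightarrow>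
      T \<noteq> T' \<Longrightarrow> r \<in> rho N A T \<inter> rho N A T' \<Longrightarrow> r' \<in> rho N A T \<inter> rho N A T' \<Longrightarrow> block r = block r'"
  shows "is_CDA d t N k v A"
  unfolding is_CDA_def
proof (intro conjI allI impI ballI iffI)
  show "is_array N k v A" by (fact array)
next
  fix i x assume i: "i + t \<le> k" and x: "\<forall>j<t. x j \<in> {0..<v}"
  define T where "T = {(i + j, x j) | j. j < t}"
  have "T \<in> cons_interactions t k v"
    unfolding cons_interactions_def T_def using i x
    by (intro CollectI exI[of _ i] exI[of _ "\<lambda>n. x (n - i)"]) simp
  then obtain r where "r \<in> rho N A T"
    using covers[of T 0] by auto
  then show "\<exists>r<N. \<forall>j<t. A r (i + j) = x j"
    unfolding T_def rho_def by auto
next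
  fix \<T> T assume "\<T> \<subseteq> cons_interactions t k v \<and> card \<T> = d" and "T \<in> \<T>"
  then show "rho N A T \<subseteq> rho_set N A \<T>"
    unfolding rho_set_def by blast
next
  fix \<T> T
  assume \<T>: "\<T> \<subseteq> cons_interactions t k v \<and> card \<T> = d"
    and T: "T \<in> cons_interactions t k v" and sub: "rho N A T \<subseteq> rho_set N A \<T>"
  show "T \<in> \<T>"
  proof (rule ccontr)
    assume T_notin: "T \<notin> \<T>"
    have "\<forall>s\<in>{..d}. \<exists>r. r \<in> rho N A T \<and> block r = s"
      using covers[OF T] by blast
    then obtain R where R: "\<And>s. s \<le> d \<Longrightarrow> R s \<in> rho N A T \<and> block (R s) = s"
      by (metis atMost_iff)
    have "\<forall>s\<in>{..d}. \<exists>T'. T' \<in> \<T> \<and> R s \<in> rho N A T'"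
      using R sub unfolding rho_set_def by blast
    then obtain F where F: "\<And>s. s \<le> d \<Longrightarrow> F s \<in> \<T> \<and> R s \<in> rho N A (F s)"
      by (metis atMost_iff)
    have "inj_on F {..d}"
    proof (rule inj_onI)
      fix s s' assume s: "s \<in> {..d}" "s' \<in> {..d}" and F_eq: "F s = F s'"
      have "R s \<in> rho N A T \<inter> rho N A (F s)" "R s' \<in> rho N A T \<inter> rho N A (F s)"
        using R[of s] R[of s'] F[of s] F[of s'] s unfolding F_eq by auto
      moreover have "F s \<in> cons_interactions t k v" "T \<noteq> F s"
        using F \<T> T_notin s by auto
      ultimately have "block (R s) = block (R s')"
        using same_block T by blast
      then show "s = s'"
        using R s by simp
    qed
    moreover have "finite \<T>"
      using \<T> \<open>d \<ge> 1\<close> card.infinite by fastforce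
    ultimately have "card {..d} \<le> card \<T>"
      using F by (intro card_inj_on_le) auto
    then show False using \<T> by simp
  qed
qed

lemma mod_add_right_cancel_less:
  fixes x y c v :: nat
  assumes "x < v" "y < v" "(x + c) mod v = (y + c) mod v"
  shows "x = y"
  using assms cong_add_rcancel_nat[of x c y v] cong_less_modulus_unique_nat[of x y v]
  unfolding cong_def by simp

lemma cons_interactions_2_cases:
  assumes "T \<in> cons_interactions 2 k v"
  obtains i p q where "i + 2 \<le> k" "p < v" "q < v" "T = {(i, p), (i + 1, q)}"
proof -
  obtain i x where i: "i + 2 \<le> k" and x: "\<forall>j<2. x (i + j) \<in> {0..<v}"
    and T: "T = {(i + j, x (i + j)) | j. j < 2}"
    using assms unfolding cons_interactions_def by blast
  have "T = {(i, x i), (i + 1, x (i + 1))}"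
    unfolding T less_2_cases_iff by auto
  moreover have "x i < v" "x (i + 1) < v"
    using x[rule_format, of 0] x[rule_format, of 1] by simp_all
  ultimately show thesis using i that by blast
qed

lemma rho_pair:
  "rho N A {(i, p), (i + 1, q)} = {r. r < N \<and> A r i = p \<and> A r (i + 1) = q}"
  unfolding rho_def by auto

definition cda_row :: "nat \<Rightarrow> nat \<Rightarrow> nat \<Rightarrow> nat \<Rightarrow> nat list" where
  "cda_row v s a b = [a, b, (a + b + s) mod v, (b + s) mod v]"

lemma cda_row_less:
  assumes "a < v" "b < v" "j < 4"
  shows "cda_row v s a b ! j < v"
proof -
  have "0 < v" using assms(1) by simp
  then show ?thesis
    using assms by (auto simp: cda_row_def nth_Cons' numeral_eq_Suc less_Suc_eq)
qed

lemma cda_row_window_inj: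
  assumes "i \<le> 2" and ab: "a < v" "b < v" "a' < v" "b' < v"
    and eq: "cda_row v s a b ! i = cda_row v s a' b' ! i"
      "cda_row v s a b ! (i + 1) = cda_row v s a' b' ! (i + 1)"
  shows "a = a' \<and> b = b'"
proof -
  consider "i = 0" | "i = 1" | "i = 2" using assms by linarith
  then show "a = a' \<and> b = b'"
  proof cases
    case 1 then show ?thesis using eq by (simp add: cda_row_def)
  next
    case 2
    then have "b = b'" "(a + (b + s)) mod v = (a' + (b + s)) mod v"
      using eq by (simp_all add: cda_row_def numeral_2_eq_2 add.assoc)
    then show ?thesis using mod_add_right_cancel_less ab by blast
  next
    case 3
    then have "(b + s) mod v = (b' + s) mod v"
      using eq by (simp add: cda_row_def)
    then have "b = b'"
      using mod_add_right_cancel_less ab by blast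
    then have "(a + (b + s)) mod v = (a' + (b + s)) mod v"
      using eq 3 by (simp add: cda_row_def add.assoc)
    then show ?thesis
      using mod_add_right_cancel_less ab \<open>b = b'\<close> by blast
  qed
qed

lemma cda_row_window_surj:
  assumes "i \<le> 2" "p < v" "q < v"
  obtains a b where "a < v" "b < v" "cda_row v s a b ! i = p" "cda_row v s a b ! (i + 1) = q"
proof -
  let ?f = "\<lambda>(a, b). (cda_row v s a b ! i, cda_row v s a b ! (i + 1))"
  have "?f ` ({..<v} \<times> {..<v}) \<subseteq> {..<v} \<times> {..<v}"
    using assms by (auto intro!: cda_row_less)
  moreover have "inj_on ?f ({..<v} \<times> {..<v})"
    using cda_row_window_inj[OF assms(1)] by (auto intro!: inj_onI)
  ultimately have "?f ` ({..<v} \<times> {..<v}) = {..<v} \<times> {..<v}"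
    by (intro endo_inj_surj) auto
  then have "(p, q) \<in> ?f ` ({..<v} \<times> {..<v})"
    using assms by auto
  then show thesis using that by auto
qed

lemma cda_row_block_unique:
  assumes "s < v" "s' < v" "i \<le> 2" "i' \<le> 2" "i \<noteq> i'"
    and agree: "\<And>j. j \<in> {i, i + 1, i', i' + 1} \<Longrightarrow> cda_row v s a b ! j = cda_row v s' a' b' ! j"
  shows "s = s'"
proof -
  have "{1, 3} \<subseteq> {i, i + 1, i', i' + 1} \<or> {0, 1, 2} \<subseteq> {i, i + 1, i', i' + 1}"
    using assms(3-5) by auto
  then show ?thesis
  proof
    assume "{1, 3} \<subseteq> {i, i + 1, i', i' + 1}"
    then have "b = b'" "(s + b) mod v = (s' + b) mod v"
      using agree[of 1] agree[of 3] by (simp_all add: cda_row_def numeral_eq_Suc add.commute)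
    then show ?thesis using mod_add_right_cancel_less assms(1,2) by blast
  next
    assume "{0, 1, 2} \<subseteq> {i, i + 1, i', i' + 1}"
    then have "a = a'" "b = b'" "(s + (a + b)) mod v = (s' + (a + b)) mod v"
      using agree[of 0] agree[of 1] agree[of 2] by (simp_all add: cda_row_def numeral_eq_Suc add.commute)
    then show ?thesis using mod_add_right_cancel_less assms(1,2) by blast
  qed
qed

definition cda_array :: "nat \<Rightarrow> nat \<Rightarrow> nat \<Rightarrow> nat" where
  "cda_array v r j = cda_row v (r div (v * v)) (r div v mod v) (r mod v) ! j"

lemma cda_array_row_index:
  assumes "a < v" "b < v"
  shows "cda_array v ((s * v + a) * v + b) j = cda_row v s a b ! j"
    and "((s * v + a) * v + b) div (v * v) = s"
  using assms by (simp_all add: cda_array_def div_mult2_eq)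

lemma row_index_less:
  fixes s a b v d :: nat
  assumes "s \<le> d" "a < v" "b < v"
  shows "(s * v + a) * v + b < (d + 1) * v ^ 2"
proof -
  have "(s * v + a) * v + b < (s * v + a + 1) * v"
    using assms by simp
  also have "\<dots> \<le> ((d + 1) * v) * v"
  proof (intro mult_le_mono1)
    have "s * v \<le> d * v" using assms(1) by (rule mult_le_mono1)
    then show "s * v + a + 1 \<le> (d + 1) * v" using assms(2) by (simp only: add_mult_distrib)
  qed
  finally show ?thesis by (simp add: power2_eq_square algebra_simps)
qed

lemma row_block_less:
  fixes r d v :: nat
  assumes "r < (d + 1) * v ^ 2" "d < v"
  shows "r div (v * v) < v"
proof -
  have "(d + 1) * (v * v) \<le> v * (v * v)"
    using assms(2) by (intro mult_le_mono1) simp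
  then show ?thesis
    using assms(1) by (intro less_mult_imp_div_less) (simp add: power2_eq_square)
qed

lemma cda_array_is_CDA:
  assumes "k \<le> 4" "1 \<le> d" "d < v"
  shows "is_CDA d 2 ((d + 1) * v ^ 2) k v (cda_array v)"
proof (rule is_CDA_from_blocks[where block = "\<lambda>r. r div (v * v)"])
  let ?N = "(d + 1) * v ^ 2"
  show "is_array ?N k v (cda_array v)"
    unfolding is_array_def cda_array_def
    using assms by (auto intro!: cda_row_less)
  show "1 \<le> d" by (fact assms(2))
next
  let ?N = "(d + 1) * v ^ 2"
  fix T s assume T: "T \<in> cons_interactions 2 k v" and s: "s \<le> d"
  obtain i p q where i: "i + 2 \<le> k" and pq: "p < v" "q < v" and T_eq: "T = {(i, p), (i + 1, q)}"
    using T by (rule cons_interactions_2_cases)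
  obtain a b where ab: "a < v" "b < v" "cda_row v s a b ! i = p" "cda_row v s a b ! (i + 1) = q"
    using cda_row_window_surj[of i p v q s] i pq assms(1) by auto
  show "\<exists>r\<in>rho ?N (cda_array v) T. r div (v * v) = s"
    using ab row_index_less[OF s ab(1,2)] cda_array_row_index[OF ab(1,2)]
    unfolding T_eq rho_pair by (intro bexI[of _ "(s * v + a) * v + b"]) auto
next
  let ?N = "(d + 1) * v ^ 2"
  fix T T' r r'
  assume T: "T \<in> cons_interactions 2 k v" and T': "T' \<in> cons_interactions 2 k v" and "T \<noteq> T'"
    and r: "r \<in> rho ?N (cda_array v) T \<inter> rho ?N (cda_array v) T'"
    and r': "r' \<in> rho ?N (cda_array v) T \<inter> rho ?N (cda_array v) T'"
  obtain i p q where i: "i + 2 \<le> k" and T_eq: "T = {(i, p), (i + 1, q)}"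
    using T by (rule cons_interactions_2_cases)
  obtain i' p' q' where i': "i' + 2 \<le> k" and T'_eq: "T' = {(i', p'), (i' + 1, q')}"
    using T' by (rule cons_interactions_2_cases)
  have "i \<noteq> i'"
    using r \<open>T \<noteq> T'\<close> unfolding T_eq T'_eq rho_pair by auto
  moreover have "cda_array v r j = cda_array v r' j" if "j \<in> {i, i + 1, i', i' + 1}" for j
    using r r' that unfolding T_eq T'_eq rho_pair by auto
  moreover have "r < ?N" "r' < ?N"
    using r r' unfolding rho_def by auto
  moreover have "i \<le> 2" "i' \<le> 2"
    using i i' assms(1) by simp_all
  ultimately show "r div (v * v) = r' div (v * v)"
    using cda_row_block_unique row_block_less assms(3) unfolding cda_array_def by metis
qed

theorem mainTheorem14:
  fixes v k d :: nat
  assumes "v \<ge> 2" and "k \<in> {3, 4}" and "d \<ge> 1" and "d + 1 \<le> v"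
  shows "\<exists>A. is_optimum_CDA d 2 ((d + 1) * v ^ 2) k v A"
proof -
  have "is_CDA d 2 ((d + 1) * v ^ 2) k v (cda_array v)"
    using assms by (intro cda_array_is_CDA) auto
  then show ?thesis
    unfolding is_optimum_CDA_def by blast
qed

end
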